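(* Let $\mathsf V$ be a variety and $\theta$ a congruence of $\mathbf F_{\mathsf V}(z)$. Then $\theta$ is an E-congruence if and only if there are exact congruences $\theta_1,\dots,\theta_m$ of $\mathbf F_{\mathsf V}(z)$ (for some $m\ge1$) such that $\theta=\bigcap_{k=1}^m\theta_k$.
   Context: $\mathbf F_{\mathsf V}(z)$ is the free algebra of the variety $\mathsf V$ on one generator $z$. An algebra is exact in $\mathsf V$ if it is isomorphic to a finitely generated subalgebra of a finitely generated free algebra of $\mathsf V$. A congruence $\theta$ of $\mathbf F_{\mathsf V}(z)$ is exact if $\mathbf F_{\mathsf V}(z)/\theta$ is exact in $\mathsf V$. An algebraic e-generalization problem is a homomorphism $h:\mathbf F_{\mathsf V}(z)\to\prod_{k=1}^m\mathbf E_k$ ($m\ge1$) where each $\mathbf E_k$ is a 1-generated exact algebra in $\mathsf V$ and $p_k\circ h$ is surjective onto $\mathbf E_k$ for each projection $p_k$. A congruence $\theta$ of $\mathbf F_{\mathsf V}(z)$ is an E-congruence if $\theta=\ker(h)$ for some algebraic e-generalization problem $h$, where $\ker(h)=\{(a,a'):h(a)=h(a')\}$. *)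

theory Defs
  imports Main "HOL-Library.FuncSet"
begin

record ('f, 'a) alg =
  acar :: "'a set"
  aop  :: "'f \<Rightarrow> 'a list \<Rightarrow> 'a"

definition algebra :: "('f \<Rightarrow> nat) \<Rightarrow> ('f, 'a) alg \<Rightarrow> bool" where
  "algebra ar A \<longleftrightarrow> (\<forall>f xs. length xs = ar f \<and> set xs \<subseteq> acar A \<longrightarrow> aop A f xs \<in> acar A)"

definition hom :: "('f \<Rightarrow> nat) \<Rightarrow> ('f, 'a) alg \<Rightarrow> ('f, 'b) alg \<Rightarrow> ('a \<Rightarrow> 'b) \<Rightarrow> bool" where
  "hom ar A B h \<longleftrightarrow> (\<forall>x\<in>acar A. h x \<in> acar B) \<and>
     (\<forall>f xs. length xs = ar f \<and> set xs \<subseteq> acar A \<longrightarrow> h (aop A f xs) = aop B f (map h xs))"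

definition isomorphic :: "('f \<Rightarrow> nat) \<Rightarrow> ('f, 'a) alg \<Rightarrow> ('f, 'b) alg \<Rightarrow> bool" where
  "isomorphic ar A B \<longleftrightarrow> (\<exists>h. hom ar A B h \<and> bij_betw h (acar A) (acar B))"

definition congruence :: "('f \<Rightarrow> nat) \<Rightarrow> ('f, 'a) alg \<Rightarrow> ('a \<times> 'a) set \<Rightarrow> bool" where
  "congruence ar A \<theta> \<longleftrightarrow> equiv (acar A) \<theta> \<and>
     (\<forall>f xs ys. length xs = ar f \<and> length ys = ar f \<and> set xs \<subseteq> acar A \<and> set ys \<subseteq> acar A
        \<and> list_all2 (\<lambda>x y. (x, y) \<in> \<theta>) xs ys \<longrightarrow> (aop A f xs, aop A f ys) \<in> \<theta>)"

definition quotient_alg :: "('f, 'a) alg \<Rightarrow> ('a \<times> 'a) set \<Rightarrow> ('f, 'a set) alg" where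
  "quotient_alg A \<theta> = \<lparr>acar = acar A // \<theta>,
      aop = (\<lambda>f Xs. \<theta> `` {aop A f (map (\<lambda>X. SOME x. x \<in> X) Xs)})\<rparr>"

definition sub_alg :: "('f, 'a) alg \<Rightarrow> 'a set \<Rightarrow> ('f, 'a) alg" where
  "sub_alg A S = \<lparr>acar = S, aop = aop A\<rparr>"

definition gen :: "('f \<Rightarrow> nat) \<Rightarrow> ('f, 'a) alg \<Rightarrow> 'a set \<Rightarrow> 'a set" where
  "gen ar A G = \<Inter> {B. G \<subseteq> B \<and> B \<subseteq> acar A \<and>
      (\<forall>f xs. length xs = ar f \<and> set xs \<subseteq> B \<longrightarrow> aop A f xs \<in> B)}"

definition prod_alg :: "'i set \<Rightarrow> ('i \<Rightarrow> ('f, 'a) alg) \<Rightarrow> ('f, 'i \<Rightarrow> 'a) alg" where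
  "prod_alg I A = \<lparr>acar = PiE I (\<lambda>k. acar (A k)),
      aop = (\<lambda>f xs. restrict (\<lambda>k. aop (A k) f (map (\<lambda>x. x k) xs)) I)\<rparr>"

datatype ('f, 'v) trm = Var 'v | Fn 'f "('f, 'v) trm list"

fun wf_trm :: "('f \<Rightarrow> nat) \<Rightarrow> 'v set \<Rightarrow> ('f, 'v) trm \<Rightarrow> bool" where
  "wf_trm ar X (Var x) = (x \<in> X)"
| "wf_trm ar X (Fn f ts) = (length ts = ar f \<and> (\<forall>t\<in>set ts. wf_trm ar X t))"

fun eval :: "('f, 'a) alg \<Rightarrow> ('v \<Rightarrow> 'a) \<Rightarrow> ('f, 'v) trm \<Rightarrow> 'a" where
  "eval A a (Var x) = a x"
| "eval A a (Fn f ts) = aop A f (map (eval A a) ts)"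

definition term_alg :: "('f \<Rightarrow> nat) \<Rightarrow> 'v set \<Rightarrow> ('f, ('f, 'v) trm) alg" where
  "term_alg ar X = \<lparr>acar = {t. wf_trm ar X t}, aop = Fn\<rparr>"

definition models :: "('f, 'a) alg \<Rightarrow> (('f, nat) trm \<times> ('f, nat) trm) set \<Rightarrow> bool" where
  "models A E \<longleftrightarrow> (\<forall>(s, t)\<in>E. \<forall>a. (\<forall>x. a x \<in> acar A) \<longrightarrow> eval A a s = eval A a t)"

text \<open>The variety V is given by the identities E. theta_V(X) is the intersection of all
  congruences phi of T(X) with T(X)/phi in V; F_V(X) = T(X)/theta_V(X).\<close>
definition theta_V :: "('f \<Rightarrow> nat) \<Rightarrow> (('f, nat) trm \<times> ('f, nat) trm) set \<Rightarrow> nat set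
    \<Rightarrow> (('f, nat) trm \<times> ('f, nat) trm) set" where
  "theta_V ar E X = \<Inter> {\<phi>. congruence ar (term_alg ar X) \<phi> \<and>
      models (quotient_alg (term_alg ar X) \<phi>) E}"

definition free_alg :: "('f \<Rightarrow> nat) \<Rightarrow> (('f, nat) trm \<times> ('f, nat) trm) set \<Rightarrow> nat set
    \<Rightarrow> ('f, ('f, nat) trm set) alg" where
  "free_alg ar E X = quotient_alg (term_alg ar X) (theta_V ar E X)"

text \<open>F_V(z): free algebra on the single generator z = variable 0.\<close>
definition free1 :: "('f \<Rightarrow> nat) \<Rightarrow> (('f, nat) trm \<times> ('f, nat) trm) set \<Rightarrow> ('f, ('f, nat) trm set) alg" where
  "free1 ar E = free_alg ar E {0}"

definition exact :: "('f \<Rightarrow> nat) \<Rightarrow> (('f, nat) trm \<times> ('f, nat) trm) set \<Rightarrow> ('f, 'a) alg \<Rightarrow> bool" where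
  "exact ar E A \<longleftrightarrow> (\<exists>n G. finite G \<and> G \<subseteq> acar (free_alg ar E {..<n}) \<and>
      isomorphic ar A (sub_alg (free_alg ar E {..<n}) (gen ar (free_alg ar E {..<n}) G)))"

definition one_generated :: "('f \<Rightarrow> nat) \<Rightarrow> ('f, 'a) alg \<Rightarrow> bool" where
  "one_generated ar A \<longleftrightarrow> (\<exists>a\<in>acar A. gen ar A {a} = acar A)"

definition exact_cong :: "('f \<Rightarrow> nat) \<Rightarrow> (('f, nat) trm \<times> ('f, nat) trm) set
    \<Rightarrow> (('f, nat) trm set \<times> ('f, nat) trm set) set \<Rightarrow> bool" where
  "exact_cong ar E \<theta> \<longleftrightarrow> exact ar E (quotient_alg (free1 ar E) \<theta>)"

definition ker :: "('f, 'a) alg \<Rightarrow> ('a \<Rightarrow> 'b) \<Rightarrow> ('a \<times> 'a) set" where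
  "ker A h = {(a, a'). a \<in> acar A \<and> a' \<in> acar A \<and> h a = h a'}"

text \<open>The E_k are taken with carriers of the type of elements of free algebras
  (every exact algebra is isomorphic to such an algebra).\<close>
definition e_gen_problem :: "('f \<Rightarrow> nat) \<Rightarrow> (('f, nat) trm \<times> ('f, nat) trm) set \<Rightarrow> nat
    \<Rightarrow> (nat \<Rightarrow> ('f, ('f, nat) trm set) alg)
    \<Rightarrow> (('f, nat) trm set \<Rightarrow> nat \<Rightarrow> ('f, nat) trm set) \<Rightarrow> bool" where
  "e_gen_problem ar E m Ek h \<longleftrightarrow> m \<ge> 1 \<and>
     (\<forall>k\<in>{1..m}. algebra ar (Ek k) \<and> exact ar E (Ek k) \<and> one_generated ar (Ek k)) \<and>
     hom ar (free1 ar E) (prod_alg {1..m} Ek) h \<and>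
     (\<forall>k\<in>{1..m}. (\<lambda>a. h a k) ` acar (free1 ar E) = acar (Ek k))"

definition E_congruence :: "('f \<Rightarrow> nat) \<Rightarrow> (('f, nat) trm \<times> ('f, nat) trm) set
    \<Rightarrow> (('f, nat) trm set \<times> ('f, nat) trm set) set \<Rightarrow> bool" where
  "E_congruence ar E \<theta> \<longleftrightarrow> (\<exists>m Ek h. e_gen_problem ar E m Ek h \<and> \<theta> = ker (free1 ar E) h)"

end

(*
  The kernel of a homomorphism into a finite product is the intersection of the kernels of its
  components. In an e-generalization problem every component is a surjective homomorphism onto
  an exact algebra, so by the homomorphism theorem its kernel is an exact congruence. Conversely,
  an exact congruence theta_k is the kernel of the quotient map followed by an isomorphism onto a
  finitely generated subalgebra E_k of a free algebra; E_k is one-generated, being a homomorphic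
  image of F_V(z), and tupling these maps gives an e-generalization problem whose kernel is the
  intersection of the theta_k.
*)

theory Submission
  imports Defs
begin

lemma gen_closed:
  assumes "set xs \<subseteq> gen ar A G" "length xs = ar f"
  shows "aop A f xs \<in> gen ar A G"
  using assms unfolding gen_def by blast

lemma subset_gen: "G \<subseteq> gen ar A G"
  unfolding gen_def by blast

lemma gen_minimal:
  assumes "G \<subseteq> S" "S \<subseteq> acar A"
    and "\<And>f xs. length xs = ar f \<Longrightarrow> set xs \<subseteq> S \<Longrightarrow> aop A f xs \<in> S"
  shows "gen ar A G \<subseteq> S"
  unfolding gen_def by (rule Inter_lower) (use assms in blast)

lemma gen_subset_carrier:
  assumes "algebra ar A" "G \<subseteq> acar A"
  shows "gen ar A G \<subseteq> acar A"
  using assms unfolding algebra_def by (intro gen_minimal) auto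

lemma algebra_sub_alg_gen: "algebra ar (sub_alg A (gen ar A G))"
  unfolding algebra_def sub_alg_def by (simp add: gen_closed)

lemma hom_image_gen:
  assumes h: "hom ar A B h" and A: "algebra ar A" and G: "G \<subseteq> acar A"
  shows "h ` gen ar A G \<subseteq> gen ar B (h ` G)"
proof -
  let ?S = "{x \<in> acar A. h x \<in> gen ar B (h ` G)}"
  have "gen ar A G \<subseteq> ?S"
  proof (rule gen_minimal)
    show "G \<subseteq> ?S" using G subset_gen[of "h ` G" ar B] by blast
  next
    fix f xs assume xs: "length xs = ar f" "set xs \<subseteq> ?S"
    have "aop A f xs \<in> acar A" using A xs unfolding algebra_def by blast
    moreover have "h (aop A f xs) = aop B f (map h xs)" using h xs unfolding hom_def by blast
    moreover have "aop B f (map h xs) \<in> gen ar B (h ` G)" using xs by (intro gen_closed) auto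
    ultimately show "aop A f xs \<in> ?S" by simp
  qed blast
  then show ?thesis by blast
qed

lemma one_generated_hom_image:
  assumes "hom ar A B h" "h ` acar A = acar B" "algebra ar A" "algebra ar B" "one_generated ar A"
  shows "one_generated ar B"
proof -
  obtain a where a: "a \<in> acar A" "gen ar A {a} = acar A"
    using assms(5) unfolding one_generated_def by blast
  have "acar B \<subseteq> gen ar B {h a}"
    using hom_image_gen[OF assms(1,3), of "{a}"] a assms(2) by simp
  moreover have "gen ar B {h a} \<subseteq> acar B"
    using a assms(2,4) by (intro gen_subset_carrier) auto
  ultimately show ?thesis
    unfolding one_generated_def using a assms(2) by blast
qed

lemma hom_comp:
  assumes "hom ar A B g" "hom ar B C h"
  shows "hom ar A C (h \<circ> g)"
  unfolding hom_def
proof (intro conjI ballI allI impI)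
  fix x assume "x \<in> acar A"
  then show "(h \<circ> g) x \<in> acar C" using assms unfolding hom_def by auto
next
  fix f xs assume xs: "length xs = ar f \<and> set xs \<subseteq> acar A"
  then have "set (map g xs) \<subseteq> acar B" "length (map g xs) = ar f"
    using assms(1) unfolding hom_def by auto
  then show "(h \<circ> g) (aop A f xs) = aop C f (map (h \<circ> g) xs)"
    using assms xs unfolding hom_def by simp
qed

lemma isomorphic_refl: "isomorphic ar A A"
  unfolding isomorphic_def hom_def by (auto intro: exI[of _ id])

lemma isomorphic_trans:
  assumes "isomorphic ar A B" "isomorphic ar B C"
  shows "isomorphic ar A C"
  using assms unfolding isomorphic_def by (meson bij_betw_trans hom_comp)

lemma exact_sub_alg_gen:
  assumes "finite G" "G \<subseteq> acar (free_alg ar E {..<n})"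
  shows "exact ar E (sub_alg (free_alg ar E {..<n}) (gen ar (free_alg ar E {..<n}) G))"
  unfolding exact_def using assms isomorphic_refl by blast

lemma exact_isomorphic:
  assumes "isomorphic ar A B" "exact ar E B"
  shows "exact ar E A"
  using assms unfolding exact_def by (meson isomorphic_trans)

lemma congruence_equiv: "congruence ar A \<theta> \<Longrightarrow> equiv (acar A) \<theta>"
  unfolding congruence_def by blast

lemma congruence_aop:
  assumes "congruence ar A \<theta>" "length xs = ar f" "length ys = ar f"
    and "set xs \<subseteq> acar A" "set ys \<subseteq> acar A" "list_all2 (\<lambda>x y. (x, y) \<in> \<theta>) xs ys"
  shows "(aop A f xs, aop A f ys) \<in> \<theta>"
  using assms unfolding congruence_def by blast

lemma congruence_Inter:
  assumes "S \<noteq> {}" "\<And>\<theta>. \<theta> \<in> S \<Longrightarrow> congruence ar A \<theta>"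
  shows "congruence ar A (\<Inter>S)"
  unfolding congruence_def
proof (intro conjI allI impI InterI)
  have eq: "\<And>\<theta>. \<theta> \<in> S \<Longrightarrow> equiv (acar A) \<theta>"
    using assms(2) by (rule congruence_equiv)
  show "equiv (acar A) (\<Inter>S)"
  proof (rule equivI)
    show "\<Inter>S \<subseteq> acar A \<times> acar A" using eq assms(1) unfolding equiv_def by blast
    show "refl_on (acar A) (\<Inter>S)" using eq assms(1) unfolding equiv_def refl_on_def by blast
    show "sym (\<Inter>S)" using eq unfolding equiv_def sym_def by blast
    show "trans (\<Inter>S)" using eq unfolding equiv_def trans_def by blast
  qed
next
  fix f xs ys \<theta>
  assume xs: "length xs = ar f \<and> length ys = ar f \<and> set xs \<subseteq> acar A \<and> set ys \<subseteq> acar A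
      \<and> list_all2 (\<lambda>x y. (x, y) \<in> \<Inter>S) xs ys" and \<theta>: "\<theta> \<in> S"
  then have "list_all2 (\<lambda>x y. (x, y) \<in> \<theta>) xs ys"
    by (auto elim: list_all2_mono)
  then show "(aop A f xs, aop A f ys) \<in> \<theta>"
    using xs by (intro congruence_aop[OF assms(2)[OF \<theta>]]) auto
qed

lemma congruence_full:
  assumes "algebra ar A"
  shows "congruence ar A (acar A \<times> acar A)"
  using assms unfolding congruence_def algebra_def
  by (simp add: equiv_def refl_on_def sym_def trans_def)

lemma some_in_class:
  assumes "equiv (acar A) \<theta>" "X \<in> acar A // \<theta>"
  shows "(SOME x. x \<in> X) \<in> X"
  using assms in_quotient_imp_non_empty by (metis some_in_eq)

lemma algebra_quotient_alg:
  assumes \<theta>: "congruence ar A \<theta>" and A: "algebra ar A"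
  shows "algebra ar (quotient_alg A \<theta>)"
  unfolding algebra_def
proof (intro allI impI)
  fix f Xs assume Xs: "length Xs = ar f \<and> set Xs \<subseteq> acar (quotient_alg A \<theta>)"
  have "equiv (acar A) \<theta>" using \<theta> by (rule congruence_equiv)
  then have "set (map (\<lambda>X. SOME x. x \<in> X) Xs) \<subseteq> acar A"
    using Xs some_in_class in_quotient_imp_subset by (fastforce simp: quotient_alg_def)
  then have "aop A f (map (\<lambda>X. SOME x. x \<in> X) Xs) \<in> acar A"
    using A Xs unfolding algebra_def by simp
  then show "aop (quotient_alg A \<theta>) f Xs \<in> acar (quotient_alg A \<theta>)"
    by (simp add: quotient_alg_def quotientI)
qed

lemma image_quotient_map: "(\<lambda>a. \<theta> `` {a}) ` acar A = acar (quotient_alg A \<theta>)"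
  by (auto simp: quotient_alg_def quotient_def)

lemma hom_quotient_map:
  assumes \<theta>: "congruence ar A \<theta>"
  shows "hom ar A (quotient_alg A \<theta>) (\<lambda>a. \<theta> `` {a})"
  unfolding hom_def
proof (intro conjI ballI allI impI)
  fix x assume "x \<in> acar A"
  then show "\<theta> `` {x} \<in> acar (quotient_alg A \<theta>)"
    using image_quotient_map[of \<theta> A] by blast
next
  have eq: "equiv (acar A) \<theta>" using \<theta> by (rule congruence_equiv)
  fix f xs assume xs: "length xs = ar f \<and> set xs \<subseteq> acar A"
  let ?ys = "map (\<lambda>X. SOME x. x \<in> X) (map (\<lambda>a. \<theta> `` {a}) xs)"
  have rel: "(x, SOME y. y \<in> \<theta> `` {x}) \<in> \<theta>" if "x \<in> set xs" for x
  proof -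
    have "\<theta> `` {x} \<in> acar A // \<theta>" using xs that by (blast intro: quotientI)
    then have "(SOME y. y \<in> \<theta> `` {x}) \<in> \<theta> `` {x}" by (rule some_in_class[OF eq])
    then show ?thesis by simp
  qed
  then have "list_all2 (\<lambda>x y. (x, y) \<in> \<theta>) xs ?ys"
    by (simp add: list.rel_map list_all2_same)
  moreover have "set ?ys \<subseteq> acar A"
    using rel eq unfolding equiv_def by fastforce
  ultimately have "(aop A f xs, aop A f ?ys) \<in> \<theta>"
    using xs by (intro congruence_aop[OF \<theta>]) auto
  then have "\<theta> `` {aop A f xs} = \<theta> `` {aop A f ?ys}" by (rule equiv_class_eq[OF eq])
  then show "\<theta> `` {aop A f xs} = aop (quotient_alg A \<theta>) f (map (\<lambda>a. \<theta> `` {a}) xs)"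
    by (simp add: quotient_alg_def)
qed

lemma congruence_ker:
  assumes h: "hom ar A B h" and A: "algebra ar A"
  shows "congruence ar A (ker A h)"
  unfolding congruence_def
proof (intro conjI allI impI)
  show "equiv (acar A) (ker A h)"
    by (rule equivI) (auto simp: ker_def refl_on_def sym_def trans_def)
next
  fix f xs ys
  assume xs: "length xs = ar f \<and> length ys = ar f \<and> set xs \<subseteq> acar A \<and> set ys \<subseteq> acar A
      \<and> list_all2 (\<lambda>x y. (x, y) \<in> ker A h) xs ys"
  then have "map h xs = map h ys"
    by (auto simp: ker_def list_all2_conv_all_nth intro: nth_equalityI)
  moreover have "h (aop A f xs) = aop B f (map h xs)" "h (aop A f ys) = aop B f (map h ys)"
    using h xs unfolding hom_def by blast+
  moreover have "aop A f xs \<in> acar A" "aop A f ys \<in> acar A"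
    using A xs unfolding algebra_def by blast+
  ultimately show "(aop A f xs, aop A f ys) \<in> ker A h"
    unfolding ker_def by simp
qed

lemma ker_quotient_map:
  assumes "equiv (acar A) \<theta>"
  shows "ker A (\<lambda>a. \<theta> `` {a}) = \<theta>"
  using assms eq_equiv_class_iff[OF assms] unfolding ker_def equiv_def refl_on_def by auto

lemma ker_comp_inj_on:
  assumes "inj_on g (f ` acar A)"
  shows "ker A (g \<circ> f) = ker A f"
  unfolding ker_def by (auto simp: inj_on_eq_iff[OF assms])

lemma quotient_ker_isomorphic:
  assumes h: "hom ar A B h" and A: "algebra ar A" and onto: "h ` acar A = acar B"
  shows "isomorphic ar (quotient_alg A (ker A h)) B"
proof -
  let ?K = "ker A h"
  let ?Q = "quotient_alg A ?K"
  define \<phi> where "\<phi> X = h (SOME x. x \<in> X)" for X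
  have eq: "equiv (acar A) ?K" using congruence_ker[OF h A] by (rule congruence_equiv)
  have carrier: "acar ?Q = acar A // ?K" by (simp add: quotient_alg_def)
  have rep: "(SOME x. x \<in> X) \<in> acar A" if "X \<in> acar ?Q" for X
    using some_in_class[OF eq] in_quotient_imp_subset[OF eq] that carrier by blast
  have \<phi>_class: "\<phi> (?K `` {a}) = h a" if "a \<in> acar A" for a
    using some_in_class[OF eq quotientI[OF that]] unfolding \<phi>_def ker_def by auto
  have hom: "hom ar ?Q B \<phi>"
    unfolding hom_def
  proof (intro conjI ballI allI impI)
    fix X assume "X \<in> acar ?Q"
    then show "\<phi> X \<in> acar B" using rep h unfolding \<phi>_def hom_def by blast
  next
    fix f Xs assume Xs: "length Xs = ar f \<and> set Xs \<subseteq> acar ?Q"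
    let ?ys = "map (\<lambda>X. SOME x. x \<in> X) Xs"
    have ys: "set ?ys \<subseteq> acar A" "length ?ys = ar f" using Xs rep by auto
    then have "aop A f ?ys \<in> acar A" using A unfolding algebra_def by blast
    then have "\<phi> (aop ?Q f Xs) = h (aop A f ?ys)"
      using \<phi>_class by (simp add: quotient_alg_def)
    also have "\<dots> = aop B f (map \<phi> Xs)"
      using h ys unfolding hom_def \<phi>_def by (simp add: o_def)
    finally show "\<phi> (aop ?Q f Xs) = aop B f (map \<phi> Xs)" .
  qed
  have "inj_on \<phi> (acar ?Q)"
  proof (rule inj_onI)
    fix X Y assume "X \<in> acar ?Q" "Y \<in> acar ?Q" "\<phi> X = \<phi> Y"
    then obtain a b where "a \<in> acar A" "b \<in> acar A" "X = ?K `` {a}" "Y = ?K `` {b}" "h a = h b"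
      using carrier \<phi>_class by (auto elim!: quotientE)
    then show "X = Y" using equiv_class_eq[OF eq] unfolding ker_def by simp
  qed
  moreover have "\<phi> ` acar ?Q = acar B"
  proof -
    have "\<phi> ` acar ?Q = (\<lambda>a. \<phi> (?K `` {a})) ` acar A"
      using image_quotient_map[of ?K A] by (metis image_image)
    also have "\<dots> = h ` acar A" using \<phi>_class by (rule image_cong[OF refl])
    finally show ?thesis using onto by simp
  qed
  ultimately show ?thesis
    unfolding isomorphic_def bij_betw_def using hom by blast
qed

text \<open>The target is the subalgebra of the free algebra itself rather than an arbitrary
  isomorphic copy, so that it has the carrier type required by e_gen_problem.\<close>

lemma exact_quotient_imp_ex_surj_hom:
  assumes \<theta>: "congruence ar A \<theta>" and "exact ar E (quotient_alg A \<theta>)"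
  shows "\<exists>(B :: ('f, ('f, nat) trm set) alg) \<psi>. algebra ar B \<and> exact ar E B \<and>
    hom ar A B \<psi> \<and> \<psi> ` acar A = acar B \<and> ker A \<psi> = \<theta>"
proof -
  let ?Q = "quotient_alg A \<theta>"
  obtain n G \<Phi> where G: "finite G" "G \<subseteq> acar (free_alg ar E {..<n})"
    and \<Phi>: "hom ar ?Q (sub_alg (free_alg ar E {..<n}) (gen ar (free_alg ar E {..<n}) G)) \<Phi>"
      "bij_betw \<Phi> (acar ?Q) (acar (sub_alg (free_alg ar E {..<n}) (gen ar (free_alg ar E {..<n}) G)))"
    using assms(2) unfolding exact_def isomorphic_def by blast
  let ?S = "sub_alg (free_alg ar E {..<n}) (gen ar (free_alg ar E {..<n}) G)"
  let ?\<pi> = "\<lambda>a. \<theta> `` {a}"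
  have "hom ar A ?S (\<Phi> \<circ> ?\<pi>)"
    using hom_quotient_map[OF \<theta>] \<Phi>(1) by (rule hom_comp)
  moreover have "(\<Phi> \<circ> ?\<pi>) ` acar A = acar ?S"
    using \<Phi>(2) image_quotient_map[of \<theta> A] by (metis bij_betw_def image_comp)
  moreover have "ker A (\<Phi> \<circ> ?\<pi>) = \<theta>"
    using \<Phi>(2) image_quotient_map[of \<theta> A] ker_comp_inj_on[of \<Phi> ?\<pi> A]
      ker_quotient_map[OF congruence_equiv[OF \<theta>]]
    by (simp add: bij_betw_def)
  ultimately show ?thesis
    using algebra_sub_alg_gen exact_sub_alg_gen[OF G] by blast
qed

lemma hom_prod_alg_component:
  assumes "hom ar A (prod_alg I B) h" "k \<in> I"
  shows "hom ar A (B k) (\<lambda>a. h a k)"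
  using assms unfolding hom_def prod_alg_def by (auto simp: o_def)

lemma hom_prod_alg_extensional:
  assumes "hom ar A (prod_alg I B) h" "a \<in> acar A"
  shows "h a \<in> extensional I"
  using assms unfolding hom_def prod_alg_def by (auto simp: PiE_def)

lemma hom_prod_alg_tuple:
  assumes "\<And>k. k \<in> I \<Longrightarrow> hom ar A (B k) (\<psi> k)"
  shows "hom ar A (prod_alg I B) (\<lambda>a. restrict (\<lambda>k. \<psi> k a) I)"
  using assms unfolding hom_def prod_alg_def by (auto simp: o_def intro!: restrict_ext)

lemma ker_extensional:
  assumes "I \<noteq> {}" "\<And>a. a \<in> acar A \<Longrightarrow> h a \<in> extensional I"
  shows "ker A h = (\<Inter>k\<in>I. ker A (\<lambda>a. h a k))"
proof -
  have "h a = h b \<longleftrightarrow> (\<forall>k\<in>I. h a k = h b k)" if "a \<in> acar A" "b \<in> acar A" for a b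
    using assms(2)[OF that(1)] assms(2)[OF that(2)] by (auto intro: extensionalityI)
  then show ?thesis
    using assms(1) unfolding ker_def by auto
qed

lemma algebra_term_alg: "algebra ar (term_alg ar X)"
  unfolding algebra_def term_alg_def by auto

lemma gen_Var_term_alg: "gen ar (term_alg ar X) (Var ` X) = acar (term_alg ar X)"
proof
  show "gen ar (term_alg ar X) (Var ` X) \<subseteq> acar (term_alg ar X)"
    by (rule gen_subset_carrier[OF algebra_term_alg]) (auto simp: term_alg_def)
next
  have "t \<in> gen ar (term_alg ar X) (Var ` X)" if "wf_trm ar X t" for t
    using that
  proof (induction t)
    case (Var x)
    then show ?case using subset_gen[of "Var ` X" ar "term_alg ar X"] by auto
  next
    case (Fn f ts)
    then have "aop (term_alg ar X) f ts \<in> gen ar (term_alg ar X) (Var ` X)"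
      by (intro gen_closed) auto
    then show ?case by (simp add: term_alg_def)
  qed
  then show "acar (term_alg ar X) \<subseteq> gen ar (term_alg ar X) (Var ` X)"
    by (auto simp: term_alg_def)
qed

lemma eval_quotient_full:
  assumes A: "algebra ar A" and ne: "acar A \<noteq> {}"
    and "wf_trm ar UNIV s" and a: "\<And>x. a x = acar A"
  shows "eval (quotient_alg A (acar A \<times> acar A)) a s = acar A"
  using assms(3)
proof (induction s)
  case (Var x)
  then show ?case using a by simp
next
  case (Fn f ts)
  let ?Q = "quotient_alg A (acar A \<times> acar A)" and ?c = "SOME x. x \<in> acar A"
  have "?c \<in> acar A" using ne by (simp add: some_in_eq)
  then have "set (map (\<lambda>_. ?c) ts) \<subseteq> acar A" "length (map (\<lambda>_. ?c) ts) = ar f"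
    using Fn.prems by auto
  then have closed: "aop A f (map (\<lambda>_. ?c) ts) \<in> acar A"
    using A unfolding algebra_def by blast
  have IH: "map (eval ?Q a) ts = map (\<lambda>_. acar A) ts"
    using Fn by auto
  have "eval ?Q a (Fn f ts)
      = (acar A \<times> acar A) `` {aop A f (map (\<lambda>X. SOME x. x \<in> X) (map (eval ?Q a) ts))}"
    by (simp add: quotient_alg_def)
  also have "\<dots> = (acar A \<times> acar A) `` {aop A f (map (\<lambda>_. ?c) ts)}"
    by (simp only: IH map_map o_def)
  also have "\<dots> = acar A" using closed by auto
  finally show ?case .
qed

lemma models_quotient_full:
  assumes "algebra ar A" "acar A \<noteq> {}"
    and wf: "\<forall>(s, t)\<in>E. wf_trm ar UNIV s \<and> wf_trm ar UNIV t"
  shows "models (quotient_alg A (acar A \<times> acar A)) E"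
  unfolding models_def
proof clarify
  fix s t and a :: "nat \<Rightarrow> _"
  assume st: "(s, t) \<in> E" and a: "\<forall>x. a x \<in> acar (quotient_alg A (acar A \<times> acar A))"
  have "acar (quotient_alg A (acar A \<times> acar A)) = {acar A}"
    using assms(2) by (auto simp: quotient_alg_def quotient_def)
  then have a_const: "\<And>x. a x = acar A" using a by blast
  have "wf_trm ar UNIV s" "wf_trm ar UNIV t" using wf st by auto
  then show "eval (quotient_alg A (acar A \<times> acar A)) a s =
      eval (quotient_alg A (acar A \<times> acar A)) a t"
    using eval_quotient_full[where a = a, OF assms(1,2) _ a_const] by simp
qed

text \<open>The full relation qualifies, so the intersection defining theta_V is not taken over the
  empty family.\<close>

lemma congruence_theta_V:
  assumes "X \<noteq> {}" "\<forall>(s, t)\<in>E. wf_trm ar UNIV s \<and> wf_trm ar UNIV t"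
  shows "congruence ar (term_alg ar X) (theta_V ar E X)"
  unfolding theta_V_def
proof (rule congruence_Inter)
  let ?T = "term_alg ar X"
  obtain x where "x \<in> X" using assms(1) by blast
  then have "Var x \<in> acar ?T" by (simp add: term_alg_def)
  then have "acar ?T \<noteq> {}" by blast
  then have "congruence ar ?T (acar ?T \<times> acar ?T) \<and>
      models (quotient_alg ?T (acar ?T \<times> acar ?T)) E"
    using congruence_full models_quotient_full algebra_term_alg assms(2) by blast
  then show "{\<phi>. congruence ar ?T \<phi> \<and> models (quotient_alg ?T \<phi>) E} \<noteq> {}" by blast
qed blast

lemma algebra_free_alg:
  assumes "X \<noteq> {}" "\<forall>(s, t)\<in>E. wf_trm ar UNIV s \<and> wf_trm ar UNIV t"
  shows "algebra ar (free_alg ar E X)"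
  unfolding free_alg_def
  by (rule algebra_quotient_alg[OF congruence_theta_V[OF assms] algebra_term_alg])

lemma algebra_free1:
  assumes "\<forall>(s, t)\<in>E. wf_trm ar UNIV s \<and> wf_trm ar UNIV t"
  shows "algebra ar (free1 ar E)"
  unfolding free1_def using algebra_free_alg[OF _ assms] by simp

lemma one_generated_free1:
  assumes "\<forall>(s, t)\<in>E. wf_trm ar UNIV s \<and> wf_trm ar UNIV t"
  shows "one_generated ar (free1 ar E)"
proof (rule one_generated_hom_image)
  let ?T = "term_alg ar {0}"
  show "hom ar ?T (free1 ar E) (\<lambda>a. theta_V ar E {0} `` {a})"
    unfolding free1_def free_alg_def using congruence_theta_V[OF _ assms]
    by (intro hom_quotient_map) simp
  show "(\<lambda>a. theta_V ar E {0} `` {a}) ` acar ?T = acar (free1 ar E)"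
    unfolding free1_def free_alg_def by (rule image_quotient_map)
  show "algebra ar ?T" by (rule algebra_term_alg)
  show "algebra ar (free1 ar E)" using assms by (rule algebra_free1)
  have "gen ar ?T {Var 0} = acar ?T" using gen_Var_term_alg[of ar "{0}"] by simp
  moreover have "Var 0 \<in> acar ?T" by (simp add: term_alg_def)
  ultimately show "one_generated ar ?T"
    unfolding one_generated_def by blast
qed

lemma Inter_exact_cong_if_E_congruence:
  assumes wf: "\<forall>(s, t)\<in>E. wf_trm ar UNIV s \<and> wf_trm ar UNIV t"
    and "E_congruence ar E \<theta>"
  shows "\<exists>m::nat \<ge> 1. \<exists>\<theta>s. (\<forall>k\<in>{1..m}. congruence ar (free1 ar E) (\<theta>s k) \<and> exact_cong ar E (\<theta>s k))
    \<and> \<theta> = (\<Inter>k\<in>{1..m}. \<theta>s k)"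
proof -
  let ?F = "free1 ar E"
  obtain m Ek h where "e_gen_problem ar E m Ek h" and \<theta>: "\<theta> = ker ?F h"
    using assms(2) unfolding E_congruence_def by blast
  then have m: "m \<ge> 1" and Ek: "\<And>k. k \<in> {1..m} \<Longrightarrow> exact ar E (Ek k)"
    and h: "hom ar ?F (prod_alg {1..m} Ek) h"
    and onto: "\<And>k. k \<in> {1..m} \<Longrightarrow> (\<lambda>a. h a k) ` acar ?F = acar (Ek k)"
    unfolding e_gen_problem_def by blast+
  have F: "algebra ar ?F" using wf by (rule algebra_free1)
  let ?\<theta>s = "\<lambda>k. ker ?F (\<lambda>a. h a k)"
  have exact: "\<forall>k\<in>{1..m}. congruence ar ?F (?\<theta>s k) \<and> exact_cong ar E (?\<theta>s k)"
  proof
    fix k assume k: "k \<in> {1..m}"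
    have hk: "hom ar ?F (Ek k) (\<lambda>a. h a k)" using h k by (rule hom_prod_alg_component)
    show "congruence ar ?F (?\<theta>s k) \<and> exact_cong ar E (?\<theta>s k)"
      unfolding exact_cong_def
      using congruence_ker[OF hk F]
        exact_isomorphic[OF quotient_ker_isomorphic[OF hk F onto[OF k]] Ek[OF k]]
      by blast
  qed
  have Inter: "\<theta> = (\<Inter>k\<in>{1..m}. ?\<theta>s k)"
    unfolding \<theta> using m by (intro ker_extensional hom_prod_alg_extensional[OF h]) simp_all
  show ?thesis
  proof (intro exI conjI)
    show "m \<ge> 1" by (rule m)
    show "\<forall>k\<in>{1..m}. congruence ar ?F (?\<theta>s k) \<and> exact_cong ar E (?\<theta>s k)" by (rule exact)
    show "\<theta> = (\<Inter>k\<in>{1..m}. ?\<theta>s k)" by (rule Inter)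
  qed
qed

lemma E_congruence_if_Inter_exact_cong:
  fixes ar :: "'f \<Rightarrow> nat" and m :: nat
  assumes wf: "\<forall>(s, t)\<in>E. wf_trm ar UNIV s \<and> wf_trm ar UNIV t" and m: "m \<ge> 1"
    and \<theta>s: "\<forall>k\<in>{1..m}. congruence ar (free1 ar E) (\<theta>s k) \<and> exact_cong ar E (\<theta>s k)"
  shows "E_congruence ar E (\<Inter>k\<in>{1..m}. \<theta>s k)"
proof -
  let ?F = "free1 ar E"
  let ?P = "\<lambda>k (B :: ('f, ('f, nat) trm set) alg) \<psi>. algebra ar B \<and> exact ar E B \<and>
    hom ar ?F B \<psi> \<and> \<psi> ` acar ?F = acar B \<and> ker ?F \<psi> = \<theta>s k"
  have F: "algebra ar ?F" using wf by (rule algebra_free1)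
  have "\<forall>k\<in>{1..m}. \<exists>B \<psi>. ?P k B \<psi>"
  proof
    fix k assume "k \<in> {1..m}"
    then have "congruence ar ?F (\<theta>s k)" "exact ar E (quotient_alg ?F (\<theta>s k))"
      using \<theta>s unfolding exact_cong_def by blast+
    then show "\<exists>B \<psi>. ?P k B \<psi>" by (rule exact_quotient_imp_ex_surj_hom)
  qed
  from bchoice[OF this] obtain Ek where "\<forall>k\<in>{1..m}. \<exists>\<psi>. ?P k (Ek k) \<psi>"
    by blast
  from bchoice[OF this] obtain \<psi> where Ek: "\<forall>k\<in>{1..m}. ?P k (Ek k) (\<psi> k)"
    by blast
  define h where "h a = restrict (\<lambda>k. \<psi> k a) {1..m}" for a
  have "hom ar ?F (prod_alg {1..m} Ek) h"
    unfolding h_def using Ek by (intro hom_prod_alg_tuple) blast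
  moreover have "one_generated ar (Ek k)" if "k \<in> {1..m}" for k
  proof -
    have "hom ar ?F (Ek k) (\<psi> k)" "\<psi> k ` acar ?F = acar (Ek k)" "algebra ar (Ek k)"
      using Ek that by blast+
    from this(1,2) F this(3) one_generated_free1[OF wf] show ?thesis
      by (rule one_generated_hom_image)
  qed
  ultimately have "e_gen_problem ar E m Ek h"
    unfolding e_gen_problem_def using m Ek by (auto simp: h_def)
  moreover have "ker ?F h = (\<Inter>k\<in>{1..m}. \<theta>s k)"
  proof -
    have "ker ?F h = (\<Inter>k\<in>{1..m}. ker ?F (\<lambda>a. h a k))"
      using m by (intro ker_extensional) (auto simp: h_def)
    also have "\<dots> = (\<Inter>k\<in>{1..m}. \<theta>s k)"
      using Ek by (auto simp: h_def)
    finally show ?thesis .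
  qed
  ultimately show ?thesis
    unfolding E_congruence_def by blast
qed

theorem theorem4p4:
  fixes ar :: "'f \<Rightarrow> nat"
    and E :: "(('f, nat) trm \<times> ('f, nat) trm) set"
    and \<theta> :: "(('f, nat) trm set \<times> ('f, nat) trm set) set"
  assumes "\<forall>(s, t)\<in>E. wf_trm ar UNIV s \<and> wf_trm ar UNIV t"
    and "congruence ar (free1 ar E) \<theta>"
  shows "E_congruence ar E \<theta> \<longleftrightarrow>
    (\<exists>m::nat \<ge> 1. \<exists>\<theta>s. (\<forall>k\<in>{1..m}. congruence ar (free1 ar E) (\<theta>s k) \<and> exact_cong ar E (\<theta>s k))
       \<and> \<theta> = (\<Inter>k\<in>{1..m}. \<theta>s k))"
    (is "?lhs \<longleftrightarrow> ?rhs")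
proof
  assume ?lhs
  then show ?rhs using assms(1) by (rule Inter_exact_cong_if_E_congruence[rotated])
next
  assume ?rhs
  then obtain m :: nat and \<theta>s where m: "m \<ge> 1"
    and \<theta>s: "\<forall>k\<in>{1..m}. congruence ar (free1 ar E) (\<theta>s k) \<and> exact_cong ar E (\<theta>s k)"
    and \<theta>: "\<theta> = (\<Inter>k\<in>{1..m}. \<theta>s k)"
    by blast
  show ?lhs
    unfolding \<theta> using assms(1) m \<theta>s by (rule E_congruence_if_Inter_exact_cong)
qed

end
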